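(* Let $l$ be a (random) convex and differentiable loss function on $\mathbb{R}^p$, let $\lambda_1\ge\dots\ge\lambda_p\ge 0$ be arbitrary, and let $\hat b$ be a minimizer of $l(b)+\sum_{i=1}^p\lambda_i|b|_{(i)}$. Let $b^0\in\mathbb{R}^p$ be a fixed vector with support $S=\{j:b^0_j\neq 0\}$ and $S^c=\{1,\dots,p\}\setminus S$. Then for any $a>0$, $$FDR=\sum_{r=1}^p\frac1r\sum_{i\in S^c}P\big(|T_i(a)|>\lambda_r,\ T(a)\in H_r\big).$$
   Context: $|w|_{(1)}\ge\dots\ge|w|_{(p)}$ are the ordered absolute values of $w\in\mathbb{R}^p$. $U(b)=-\nabla l(b)$ and $T(a)=U(\hat b)+a\hat b$. $FDR=\mathbb{E}(V/(R\vee1))$ with $V=\#\{j:b^0_j=0,\hat b_j\neq0\}$ and $R=\#\{j:\hat b_j\neq0\}$. For $r\in\{1,\dots,p\}$, $$H_r=\Big\{w\in\mathbb{R}^p:\ \forall_{j\le r}\ \sum_{i=j}^r\lambda_i<\sum_{i=j}^r|w|_{(i)}\ \text{ and }\ \forall_{j\ge r+1}\ \sum_{i=r+1}^j\lambda_i\ge\sum_{i=r+1}^j|w|_{(i)}\Big\}.$$ *)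

theory Defs
  imports "HOL-Probability.Probability"
begin

text \<open>Ordered absolute values: ord_abs w i = |w|_(i) for i in 1..p (p = CARD('n)),
  with |w|_(1) >= ... >= |w|_(p).\<close>
definition ord_abs :: "real^'n \<Rightarrow> nat \<Rightarrow> real" where
  "ord_abs w i =
     rev (sorted_list_of_multiset (image_mset (\<lambda>j. \<bar>w $ j\<bar>) (mset_set (UNIV :: 'n set)))) ! (i - 1)"

definition slope_pen :: "(nat \<Rightarrow> real) \<Rightarrow> real^'n \<Rightarrow> real" where
  "slope_pen lam b = (\<Sum>i=1..CARD('n). lam i * ord_abs b i)"

definition H_set :: "(nat \<Rightarrow> real) \<Rightarrow> nat \<Rightarrow> (real^'n) set" where
  "H_set lam r = {w.
     (\<forall>j\<in>{1..r}. (\<Sum>i=j..r. lam i) < (\<Sum>i=j..r. ord_abs w i)) \<and>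
     (\<forall>j\<in>{r+1..CARD('n)}. (\<Sum>i=r+1..j. lam i) \<ge> (\<Sum>i=r+1..j. ord_abs w i))}"

end

theory Submission
  imports Defs
begin

text \<open>
  Write \<open>J\<close> for the SLOPE penalty and \<open>U = -\<nabla>l(b)\<close> at the minimiser \<open>b\<close>. Since \<open>J\<close> is
  sublinear, the first-order conditions say that \<open>U\<close> is a subgradient of \<open>J\<close> at \<open>b\<close>:
  \<open>U \<bullet> d \<le> J d\<close> for all \<open>d\<close> and \<open>U \<bullet> b = J b\<close>.
  Testing the first condition against sign vectors bounds the sum of any \<open>k\<close> entries of \<open>|U|\<close>
  by \<open>\<lambda>\<^sub>1 + ... + \<lambda>\<^sub>k\<close>; shrinking \<open>b\<close> on its support \<open>A\<close>, \<open>|A| = R\<close>, shows that equality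
  holds on \<open>A\<close>, that \<open>U\<close> has the sign of \<open>b\<close> there, and hence \<open>|U\<^sub>j| \<ge> \<lambda>\<^sub>R\<close> on \<open>A\<close> and
  \<open>|U\<^sub>j| \<le> \<lambda>\<^sub>R\<close> off \<open>A\<close>. Consequently the \<open>R\<close> largest entries of \<open>T = U + a b\<close> are exactly those
  on \<open>A\<close>, they exceed \<open>\<lambda>\<^sub>R\<close>, and \<open>T \<in> H\<^sub>R\<close>. As the sets \<open>H\<^sub>r\<close> are pairwise disjoint, the event
  \<open>|T\<^sub>i| > \<lambda>\<^sub>r \<and> T \<in> H\<^sub>r\<close> is the event \<open>b\<^sub>i \<noteq> 0 \<and> |A| = r\<close>, and the formula is the expectation of
  the pointwise identity \<open>V / max R 1 = \<Sum>\<^sub>r 1/r \<Sum>\<^bsub>i \<notin> S\<^esub> [b\<^sub>i \<noteq> 0 \<and> R = r]\<close>.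
\<close>

section \<open>Sorting by absolute value\<close>

lemma ex_decreasing_enumeration:
  fixes f :: "'a \<Rightarrow> 'b::linorder"
  assumes "finite X"
  shows "\<exists>\<sigma>. bij_betw \<sigma> {1..card X} X \<and>
           (\<forall>i j. 1 \<le> i \<longrightarrow> i \<le> j \<longrightarrow> j \<le> card X \<longrightarrow> f (\<sigma> j) \<le> f (\<sigma> i))"
  using assms
proof (induction "card X" arbitrary: X)
  case 0
  then show ?case by (auto simp: bij_betw_def)
next
  case (Suc n)
  then have "X \<noteq> {}" by auto
  then have "Min (f ` X) \<in> f ` X"
    using Suc.prems by (intro Min_in) auto
  then obtain x where x: "x \<in> X" "f x = Min (f ` X)"
    by auto
  have x_min: "f x \<le> f y" if "y \<in> X" for y
    using x that Suc.prems by auto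
  obtain \<sigma> where \<sigma>: "bij_betw \<sigma> {1..n} (X - {x})"
    and \<sigma>_mono: "\<forall>i j. 1 \<le> i \<longrightarrow> i \<le> j \<longrightarrow> j \<le> n \<longrightarrow> f (\<sigma> j) \<le> f (\<sigma> i)"
    using Suc.hyps(1)[of "X - {x}"] Suc.hyps(2) Suc.prems x(1)
    by (metis card_Diff_singleton diff_Suc_1 finite_Diff)
  define \<tau> where "\<tau> = \<sigma>(Suc n := x)"
  have "bij_betw \<tau> {1..n} (X - {x})"
    using \<sigma> by (rule bij_betw_cong[THEN iffD1, rotated]) (auto simp: \<tau>_def)
  then have "bij_betw \<tau> ({1..n} \<union> {Suc n}) ((X - {x}) \<union> {\<tau> (Suc n)})"
    by (intro notIn_Un_bij_betw) (auto simp: \<tau>_def)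
  moreover have "{1..n} \<union> {Suc n} = {1..Suc n}" "(X - {x}) \<union> {\<tau> (Suc n)} = X"
    using x(1) by (auto simp: \<tau>_def)
  moreover have "f (\<tau> j) \<le> f (\<tau> i)" if "1 \<le> i" "i \<le> j" "j \<le> Suc n" for i j
  proof (cases "j = Suc n")
    case True
    moreover have "\<sigma> i \<in> X" if "i \<noteq> Suc n"
      using \<sigma> \<open>1 \<le> i\<close> \<open>i \<le> j\<close> \<open>j \<le> Suc n\<close> that True by (auto simp: bij_betw_def)
    ultimately show ?thesis using x_min by (auto simp: \<tau>_def)
  next
    case False
    then show ?thesis using \<sigma>_mono that by (auto simp: \<tau>_def)
  qed
  ultimately show ?case using Suc.hyps(2) by auto
qed

definition abs_sorting :: "(nat \<Rightarrow> 'n::finite) \<Rightarrow> real^'n \<Rightarrow> bool" where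
  "abs_sorting \<sigma> w \<longleftrightarrow> bij_betw \<sigma> {1..CARD('n)} UNIV \<and>
     (\<forall>i j. 1 \<le> i \<longrightarrow> i \<le> j \<longrightarrow> j \<le> CARD('n) \<longrightarrow> \<bar>w $ \<sigma> j\<bar> \<le> \<bar>w $ \<sigma> i\<bar>)"

lemma abs_sorting_exists: "\<exists>\<sigma>. abs_sorting \<sigma> w"
  using ex_decreasing_enumeration[of "UNIV" "\<lambda>j. \<bar>w $ j\<bar>"] by (simp add: abs_sorting_def)

lemma abs_sorting_bij: "abs_sorting \<sigma> w \<Longrightarrow> bij_betw \<sigma> {1..CARD('n)} (UNIV :: 'n::finite set)"
  by (simp add: abs_sorting_def)

lemma abs_sorting_mono:
  "abs_sorting \<sigma> w \<Longrightarrow> 1 \<le> i \<Longrightarrow> i \<le> j \<Longrightarrow> j \<le> CARD('n) \<Longrightarrow> \<bar>w $ \<sigma> j\<bar> \<le> \<bar>w $ \<sigma> i\<bar>"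
  for w :: "real^'n"
  by (simp add: abs_sorting_def)

lemma ord_abs_eq_abs_sorting:
  fixes w :: "real^'n"
  assumes "abs_sorting \<sigma> w" "1 \<le> i" "i \<le> CARD('n)"
  shows "ord_abs w i = \<bar>w $ \<sigma> i\<bar>"
proof -
  define L where "L = map (\<lambda>i. \<bar>w $ \<sigma> i\<bar>) [1..<CARD('n)+1]"
  have "mset L = image_mset (\<lambda>i. \<bar>w $ \<sigma> i\<bar>) (mset_set {1..<CARD('n)+1})"
    by (simp only: L_def mset_map mset_upt)
  also have "\<dots> = image_mset (\<lambda>j. \<bar>w $ j\<bar>) (image_mset \<sigma> (mset_set {1..<CARD('n)+1}))"
    by (simp add: image_mset.compositionality o_def)
  also have "image_mset \<sigma> (mset_set {1..<CARD('n)+1}) = mset_set (UNIV::'n set)"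
    using abs_sorting_bij[OF assms(1)]
    by (subst image_mset_mset_set) (auto simp: bij_betw_def atLeastLessThanSuc_atLeastAtMost)
  finally have mset_L: "mset (rev L) = image_mset (\<lambda>j. \<bar>w $ j\<bar>) (mset_set (UNIV :: 'n set))"
    by simp
  have nth_L: "L ! k = \<bar>w $ \<sigma> (Suc k)\<bar>" if "k < CARD('n)" for k
    using that by (simp add: L_def del: upt_Suc)
  have "sorted_wrt (\<ge>) L"
    unfolding sorted_wrt_iff_nth_less
    using nth_L abs_sorting_mono[OF assms(1)] by (auto simp: L_def simp del: upt_Suc)
  then have "sorted (rev L)"
    by (simp add: sorted_wrt_rev)
  then have "sorted_list_of_multiset (mset (rev L)) = rev L"
    by (simp only: sorted_list_of_multiset_mset sorted_sort_id)
  then have "rev (sorted_list_of_multiset (image_mset (\<lambda>j. \<bar>w $ j\<bar>) (mset_set (UNIV :: 'n set)))) = L"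
    by (simp only: mset_L rev_rev_ident)
  then show ?thesis using assms(2,3) nth_L[of "i - 1"] by (simp add: ord_abs_def)
qed

lemma slope_pen_eq_abs_sorting:
  "abs_sorting \<sigma> w \<Longrightarrow> slope_pen lam w = (\<Sum>i=1..CARD('n). lam i * \<bar>w $ \<sigma> i\<bar>)"
  for w :: "real^'n"
  unfolding slope_pen_def by (intro sum.cong) (auto simp: ord_abs_eq_abs_sorting)

lemma sum_initial_segment_reindex:
  assumes "bij_betw \<sigma> {1..n} X" "k \<le> n"
  shows "(\<Sum>i=1..k. f (\<sigma> i)) = (\<Sum>j\<in>\<sigma> ` {1..k}. f j)"
    and "card (\<sigma> ` {1..k}) = k"
proof -
  have "inj_on \<sigma> {1..k}"
    using assms by (intro inj_on_subset[OF bij_betw_imp_inj_on[OF assms(1)]]) auto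
  then show "(\<Sum>i=1..k. f (\<sigma> i)) = (\<Sum>j\<in>\<sigma> ` {1..k}. f j)" "card (\<sigma> ` {1..k}) = k"
    by (simp_all add: sum.reindex card_image)
qed

lemma sum_ord_abs_eq_sum_image:
  fixes w :: "real^'n"
  assumes "abs_sorting \<sigma> w" "k \<le> CARD('n)"
  shows "(\<Sum>i=1..k. ord_abs w i) = (\<Sum>j\<in>\<sigma> ` {1..k}. \<bar>w $ j\<bar>)"
  using assms sum_initial_segment_reindex(1)[OF abs_sorting_bij[OF assms(1)] assms(2)]
  by (simp add: ord_abs_eq_abs_sorting)

lemma sum_ord_abs_eq_sum_abs: "(\<Sum>i=1..CARD('n). ord_abs w i) = (\<Sum>j\<in>UNIV. \<bar>w $ j\<bar>)"
  for w :: "real^'n"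
proof -
  obtain \<sigma> where \<sigma>: "abs_sorting \<sigma> w" using abs_sorting_exists by blast
  then have "\<sigma> ` {1..CARD('n)} = UNIV" by (simp add: abs_sorting_def bij_betw_def)
  then show ?thesis using sum_ord_abs_eq_sum_image[OF \<sigma> order_refl] by simp
qed

lemma initial_segment_of_downward_closed:
  assumes "P \<subseteq> {1..(n::nat)}" "\<And>i i'. i \<in> P \<Longrightarrow> 1 \<le> i' \<Longrightarrow> i' \<le> i \<Longrightarrow> i' \<in> P"
  shows "P = {1..card P}"
proof (cases "P = {}")
  case False
  have "finite P" using assms(1) finite_subset by blast
  then have "Max P \<in> P" "\<And>i. i \<in> P \<Longrightarrow> i \<le> Max P"
    using False by auto
  then have "P = {1..Max P}"
    using assms by fastforce
  then show ?thesis by (metis card_atLeastAtMost diff_Suc_1)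
qed simp

lemma abs_sorting_superlevel_set:
  fixes w :: "real^'n"
  assumes \<sigma>: "abs_sorting \<sigma> w"
  shows "{i\<in>{1..CARD('n)}. c < \<bar>w $ \<sigma> i\<bar>} = {1..card {j. c < \<bar>w $ j\<bar>}}"
proof -
  define P where "P = {i\<in>{1..CARD('n)}. c < \<bar>w $ \<sigma> i\<bar>}"
  have bij: "bij_betw \<sigma> {1..CARD('n)} UNIV" by (rule abs_sorting_bij[OF \<sigma>])
  have inj: "inj_on \<sigma> P"
    using bij_betw_imp_inj_on[OF bij] by (rule inj_on_subset) (auto simp: P_def)
  have "\<sigma> ` P = {j. c < \<bar>w $ j\<bar>}"
    using bij by (force simp: P_def bij_betw_def)
  then have "card P = card {j. c < \<bar>w $ j\<bar>}"
    using card_image[OF inj] by simp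
  moreover have "P = {1..card P}"
  proof (rule initial_segment_of_downward_closed)
    show "P \<subseteq> {1..CARD('n)}" by (auto simp: P_def)
  next
    fix i i' assume "i \<in> P" "1 \<le> i'" "i' \<le> i"
    then show "i' \<in> P"
      using abs_sorting_mono[OF \<sigma>, of i' i] by (auto simp: P_def)
  qed
  ultimately show ?thesis by (simp add: P_def)
qed

lemma abs_sorting_prefix_eq_superlevel_set:
  fixes w :: "real^'n"
  assumes \<sigma>: "abs_sorting \<sigma> w" and A: "{j. c < \<bar>w $ j\<bar>} = A"
  shows "\<And>i. 1 \<le> i \<Longrightarrow> i \<le> CARD('n) \<Longrightarrow> \<sigma> i \<in> A \<longleftrightarrow> i \<le> card A"
    and "\<sigma> ` {1..card A} = A"
proof -
  have level: "{i\<in>{1..CARD('n)}. c < \<bar>w $ \<sigma> i\<bar>} = {1..card A}"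
    using abs_sorting_superlevel_set[OF \<sigma>, of c] A by simp
  show prefix: "\<sigma> i \<in> A \<longleftrightarrow> i \<le> card A" if "1 \<le> i" "i \<le> CARD('n)" for i
  proof -
    have "i \<in> {i\<in>{1..CARD('n)}. c < \<bar>w $ \<sigma> i\<bar>} \<longleftrightarrow> i \<in> {1..card A}"
      by (simp only: level)
    then show ?thesis using that A by auto
  qed
  have "card A \<le> CARD('n)" by (simp add: card_mono)
  show "\<sigma> ` {1..card A} = A"
  proof
    show "\<sigma> ` {1..card A} \<subseteq> A"
      using prefix \<open>card A \<le> CARD('n)\<close> by auto
    show "A \<subseteq> \<sigma> ` {1..card A}"
    proof
      fix j assume "j \<in> A"
      have "j \<in> \<sigma> ` {1..CARD('n)}"
        using abs_sorting_bij[OF \<sigma>] by (simp add: bij_betw_def)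
      then obtain i where "i \<in> {1..CARD('n)}" "j = \<sigma> i" by blast
      then show "j \<in> \<sigma> ` {1..card A}" using prefix \<open>j \<in> A\<close> by auto
    qed
  qed
qed

section \<open>The SLOPE penalty\<close>

lemma sum_le_sum_initial_segment:
  fixes f :: "nat \<Rightarrow> real"
  assumes mono: "\<And>i j. 1 \<le> i \<Longrightarrow> i \<le> j \<Longrightarrow> j \<le> n \<Longrightarrow> f j \<le> f i"
    and P: "P \<subseteq> {1..n}"
  shows "sum f P \<le> (\<Sum>i=1..card P. f i)"
proof -
  define k where "k = card P"
  define K where "K = {1..k}"
  have fin: "finite P" using P finite_subset by blast
  have "k \<le> n" using card_mono[OF _ P] by (simp add: k_def)
  have card_eq: "card (P - K) = card (K - P)"
    using fin by (simp add: card_Diff_subset_Int K_def k_def Int_commute)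
  have "sum f P = sum f (P - K) + sum f (P \<inter> K)" "sum f K = sum f (K - P) + sum f (P \<inter> K)"
    using fin by (metis K_def finite_atLeastAtMost sum.Int_Diff add.commute Int_commute)+
  moreover have "sum f (P - K) \<le> sum f (K - P)"
  proof (cases "P - K = {}")
    case True
    then have "card (K - P) = 0" using card_eq by (simp only: card.empty)
    then have "K - P = {}" by (simp add: K_def)
    then show ?thesis using True by simp
  next
    case False
    then have "1 \<le> k" using fin by (auto simp: k_def Suc_le_eq card_gt_0_iff)
    \<comment> \<open>every element of \<open>P - K\<close> lies above \<open>k\<close>, every element of \<open>K - P\<close> below it\<close>
    have "sum f (P - K) \<le> of_nat (card (P - K)) * f k"
      using P mono \<open>1 \<le> k\<close> by (intro sum_bounded_above) (auto simp: K_def)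
    also have "\<dots> \<le> sum f (K - P)"
      unfolding card_eq using mono \<open>k \<le> n\<close> by (intro sum_bounded_below) (auto simp: K_def)
    finally show ?thesis .
  qed
  ultimately show ?thesis by (simp add: K_def k_def)
qed

lemma sum_abs_le_sum_ord_abs:
  fixes w :: "real^'n"
  shows "(\<Sum>j\<in>B. \<bar>w $ j\<bar>) \<le> (\<Sum>i=1..card B. ord_abs w i)"
proof -
  obtain \<sigma> where \<sigma>: "abs_sorting \<sigma> w" using abs_sorting_exists by blast
  have bij: "bij_betw \<sigma> {1..CARD('n)} UNIV" by (rule abs_sorting_bij[OF \<sigma>])
  define P where "P = {i\<in>{1..CARD('n)}. \<sigma> i \<in> B}"
  have inj: "inj_on \<sigma> P"
    using bij_betw_imp_inj_on[OF bij] by (rule inj_on_subset) (auto simp: P_def)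
  have B: "\<sigma> ` P = B"
    using bij by (force simp: P_def bij_betw_def)
  have "card B \<le> CARD('n)" by (simp add: card_mono)
  have "(\<Sum>j\<in>B. \<bar>w $ j\<bar>) = (\<Sum>i\<in>P. \<bar>w $ \<sigma> i\<bar>)"
    using sum.reindex[OF inj] B by simp
  also have "\<dots> \<le> (\<Sum>i=1..card P. \<bar>w $ \<sigma> i\<bar>)"
    by (rule sum_le_sum_initial_segment[where n="CARD('n)"])
       (auto simp: P_def abs_sorting_mono[OF \<sigma>])
  also have "\<dots> = (\<Sum>i=1..card B. ord_abs w i)"
    using card_image[OF inj] B \<open>card B \<le> CARD('n)\<close> by (auto simp: ord_abs_eq_abs_sorting[OF \<sigma>])
  finally show ?thesis .
qed

lemma sum_by_parts:
  fixes l x :: "nat \<Rightarrow> real"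
  shows "(\<Sum>i=1..n. l i * x i)
       = (\<Sum>k=1..n. (l k - l (Suc k)) * (\<Sum>i=1..k. x i)) + l (Suc n) * (\<Sum>i=1..n. x i)"
  by (induction n) (simp_all add: algebra_simps)

lemma weighted_sum_le_of_partial_sums_le:
  fixes l x y :: "nat \<Rightarrow> real"
  assumes mono: "\<And>i j. 1 \<le> i \<Longrightarrow> i \<le> j \<Longrightarrow> j \<le> n \<Longrightarrow> l j \<le> l i"
    and le: "\<And>k. 1 \<le> k \<Longrightarrow> k < n \<Longrightarrow> (\<Sum>i=1..k. x i) \<le> (\<Sum>i=1..k. y i)"
    and eq: "(\<Sum>i=1..n. x i) = (\<Sum>i=1..n. y i)"
  shows "(\<Sum>i=1..n. l i * x i) \<le> (\<Sum>i=1..n. l i * y i)"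
proof -
  have "(\<Sum>k=1..n. (l k - l (Suc k)) * (\<Sum>i=1..k. x i))
      \<le> (\<Sum>k=1..n. (l k - l (Suc k)) * (\<Sum>i=1..k. y i))"
  proof (rule sum_mono)
    fix k assume k: "k \<in> {1..n}"
    show "(l k - l (Suc k)) * (\<Sum>i=1..k. x i) \<le> (l k - l (Suc k)) * (\<Sum>i=1..k. y i)"
    proof (cases "k = n")
      case False
      then show ?thesis using mono[of k "Suc k"] le[of k] k by (intro mult_left_mono) auto
    qed (use eq in simp)
  qed
  then show ?thesis by (simp only: sum_by_parts[of l _ n] eq)
qed

lemma slope_pen_ge_rearranged:
  fixes w :: "real^'n"
  assumes mono: "\<And>i j. 1 \<le> i \<Longrightarrow> i \<le> j \<Longrightarrow> j \<le> CARD('n) \<Longrightarrow> lam j \<le> lam i"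
    and \<pi>: "bij_betw \<pi> {1..CARD('n)} UNIV"
  shows "(\<Sum>i=1..CARD('n). lam i * \<bar>w $ \<pi> i\<bar>) \<le> slope_pen lam w"
  unfolding slope_pen_def
proof (rule weighted_sum_le_of_partial_sums_le[OF mono])
  fix k assume "1 \<le> k" "k < CARD('n)"
  then show "(\<Sum>i=1..k. \<bar>w $ \<pi> i\<bar>) \<le> (\<Sum>i=1..k. ord_abs w i)"
    using sum_initial_segment_reindex(1)[OF \<pi>, of k "\<lambda>j. \<bar>w $ j\<bar>"]
      sum_initial_segment_reindex(2)[OF \<pi>, of k]
      sum_abs_le_sum_ord_abs[where B="\<pi> ` {1..k}" and w=w]
    by simp
next
  have "\<pi> ` {1..CARD('n)} = UNIV" using \<pi> by (simp add: bij_betw_def)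
  then have "(\<Sum>i=1..CARD('n). \<bar>w $ \<pi> i\<bar>) = (\<Sum>j\<in>UNIV. \<bar>w $ j\<bar>)"
    using sum_initial_segment_reindex(1)[OF \<pi> order_refl, of "\<lambda>j. \<bar>w $ j\<bar>"] by simp
  also have "\<dots> = (\<Sum>i=1..CARD('n). ord_abs w i)"
    by (rule sum_ord_abs_eq_sum_abs[symmetric])
  finally show "(\<Sum>i=1..CARD('n). \<bar>w $ \<pi> i\<bar>) = (\<Sum>i=1..CARD('n). ord_abs w i)" .
qed auto

lemma slope_pen_add_le:
  fixes u v :: "real^'n"
  assumes mono: "\<And>i j. 1 \<le> i \<Longrightarrow> i \<le> j \<Longrightarrow> j \<le> CARD('n) \<Longrightarrow> lam j \<le> lam i"
    and nonneg: "\<And>i. 1 \<le> i \<Longrightarrow> i \<le> CARD('n) \<Longrightarrow> 0 \<le> lam i"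
  shows "slope_pen lam (u + v) \<le> slope_pen lam u + slope_pen lam v"
proof -
  obtain \<sigma> where \<sigma>: "abs_sorting \<sigma> (u + v)" using abs_sorting_exists by blast
  have "slope_pen lam (u + v) = (\<Sum>i=1..CARD('n). lam i * \<bar>(u + v) $ \<sigma> i\<bar>)"
    by (rule slope_pen_eq_abs_sorting[OF \<sigma>])
  also have "\<dots> \<le> (\<Sum>i=1..CARD('n). lam i * \<bar>u $ \<sigma> i\<bar> + lam i * \<bar>v $ \<sigma> i\<bar>)"
    using nonneg
    by (intro sum_mono) (auto simp flip: distrib_left intro: mult_left_mono abs_triangle_ineq)
  also have "\<dots> \<le> slope_pen lam u + slope_pen lam v"
    unfolding sum.distrib
    using slope_pen_ge_rearranged[OF mono abs_sorting_bij[OF \<sigma>]] by (intro add_mono)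
  finally show ?thesis .
qed

lemma slope_pen_scaleR:
  fixes w :: "real^'n"
  assumes "0 \<le> c"
  shows "slope_pen lam (c *\<^sub>R w) = c * slope_pen lam w"
proof -
  obtain \<sigma> where \<sigma>: "abs_sorting \<sigma> w" using abs_sorting_exists by blast
  then have "abs_sorting \<sigma> (c *\<^sub>R w)"
    using assms by (auto simp: abs_sorting_def abs_mult intro: mult_left_mono)
  then show ?thesis
    using assms
    by (simp add: slope_pen_eq_abs_sorting[OF \<sigma>] slope_pen_eq_abs_sorting sum_distrib_left
        abs_mult mult.left_commute)
qed

section \<open>Subgradients of the SLOPE penalty\<close>

lemma has_derivative_ge_of_increments_ge:
  fixes f :: "'a::real_normed_vector \<Rightarrow> real"
  assumes f': "(f has_derivative f') (at b)"
    and incr: "\<And>t. 0 < t \<Longrightarrow> t < 1 \<Longrightarrow> t * c \<le> f (b + t *\<^sub>R d) - f b"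
  shows "c \<le> f' d"
proof -
  have line: "((\<lambda>t. b + t *\<^sub>R d) has_derivative (\<lambda>t. t *\<^sub>R d)) (at 0)"
    by (auto intro!: derivative_eq_intros)
  have "((f \<circ> (\<lambda>t. b + t *\<^sub>R d)) has_derivative (f' \<circ> (\<lambda>t. t *\<^sub>R d))) (at 0)"
    by (rule diff_chain_at[OF line]) (simp add: f')
  moreover have "(f' \<circ> (\<lambda>t. t *\<^sub>R d)) = (\<lambda>t. t * f' d)"
    using linear_cmul[OF has_derivative_linear[OF f']] by (auto simp: fun_eq_iff)
  ultimately have "((\<lambda>t. f (b + t *\<^sub>R d)) has_derivative (\<lambda>t. t * f' d)) (at 0)"
    by (simp add: o_def)
  then have "((\<lambda>t. f (b + t *\<^sub>R d)) has_field_derivative f' d) (at 0)"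
    by (rule has_derivative_imp_has_field_derivative) simp
  then have "((\<lambda>t. (f (b + t *\<^sub>R d) - f b) / t) \<longlongrightarrow> f' d) (at 0)"
    by (simp add: DERIV_def)
  then have "((\<lambda>t. (f (b + t *\<^sub>R d) - f b) / t) \<longlongrightarrow> f' d) (at_right 0)"
    by (rule tendsto_mono[rotated]) (simp add: at_le)
  moreover have "\<forall>\<^sub>F t in at_right 0. c \<le> (f (b + t *\<^sub>R d) - f b) / t"
    unfolding eventually_at_right_field
    using incr by (intro exI[of _ 1]) (auto simp: le_divide_eq mult.commute)
  ultimately show ?thesis
    by (rule tendsto_lowerbound) simp
qed

definition slope_subgradient :: "(nat \<Rightarrow> real) \<Rightarrow> real^'n \<Rightarrow> real^'n \<Rightarrow> bool" where
  "slope_subgradient lam U b \<longleftrightarrow> (\<forall>d. U \<bullet> d \<le> slope_pen lam d) \<and> U \<bullet> b = slope_pen lam b"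

lemma slope_subgradient_of_minimizer:
  fixes f :: "real^'n \<Rightarrow> real"
  assumes mono: "\<And>i j. 1 \<le> i \<Longrightarrow> i \<le> j \<Longrightarrow> j \<le> CARD('n) \<Longrightarrow> lam j \<le> lam i"
    and nonneg: "\<And>i. 1 \<le> i \<Longrightarrow> i \<le> CARD('n) \<Longrightarrow> 0 \<le> lam i"
    and f': "(f has_derivative (\<lambda>h. g \<bullet> h)) (at b)"
    and min: "\<And>x. f b + slope_pen lam b \<le> f x + slope_pen lam x"
  shows "slope_subgradient lam (- g) b"
proof -
  let ?J = "slope_pen lam"
  have dual: "(- g) \<bullet> d \<le> ?J d" for d
  proof -
    have "- ?J d \<le> g \<bullet> d"
    proof (rule has_derivative_ge_of_increments_ge[OF f'])
      fix t :: real assume t: "0 < t" "t < 1"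
      have "?J (b + t *\<^sub>R d) \<le> ?J b + t * ?J d"
        using slope_pen_add_le[where lam=lam and u=b and v="t *\<^sub>R d", OF mono nonneg]
          slope_pen_scaleR[of t lam d] t
        by simp
      then show "t * - ?J d \<le> f (b + t *\<^sub>R d) - f b"
        using min[of "b + t *\<^sub>R d"] by simp
    qed
    then show ?thesis by simp
  qed
  have "?J b \<le> g \<bullet> (- b)"
  proof (rule has_derivative_ge_of_increments_ge[OF f'])
    fix t :: real assume t: "0 < t" "t < 1"
    have "b + t *\<^sub>R (- b) = (1 - t) *\<^sub>R b" by (simp add: algebra_simps)
    then have "?J (b + t *\<^sub>R (- b)) = (1 - t) * ?J b"
      using slope_pen_scaleR[of "1 - t" lam b] t by simp
    then show "t * ?J b \<le> f (b + t *\<^sub>R (- b)) - f b"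
      using min[of "b + t *\<^sub>R (- b)"] by (simp add: algebra_simps)
  qed
  then have "(- g) \<bullet> b = ?J b"
    using dual[of b] by simp
  then show ?thesis
    unfolding slope_subgradient_def using dual by blast
qed

lemma sum_abs_le_sum_lam_of_dual:
  fixes U :: "real^'n"
  assumes dual: "\<And>d. U \<bullet> d \<le> slope_pen lam d"
  shows "(\<Sum>j\<in>B. \<bar>U $ j\<bar>) \<le> (\<Sum>i=1..card B. lam i)"
proof -
  define d :: "real^'n" where "d = (\<chi> j. if j \<in> B then (if 0 \<le> U $ j then 1 else -1) else 0)"
  have abs_d: "\<bar>d $ j\<bar> = (if j \<in> B then 1 else 0)" for j
    by (simp add: d_def)
  have "U \<bullet> d = (\<Sum>j\<in>UNIV. if j \<in> B then \<bar>U $ j\<bar> else 0)"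
    unfolding inner_vec_def d_def by (intro sum.cong) auto
  then have Ud: "U \<bullet> d = (\<Sum>j\<in>B. \<bar>U $ j\<bar>)"
    by (simp add: sum.If_cases)
  obtain \<sigma> where \<sigma>: "abs_sorting \<sigma> d" using abs_sorting_exists by blast
  have "slope_pen lam d = (\<Sum>i\<in>{1..CARD('n)}. if 1/2 < \<bar>d $ \<sigma> i\<bar> then lam i else 0)"
    unfolding slope_pen_eq_abs_sorting[OF \<sigma>] by (intro sum.cong) (auto simp: abs_d)
  also have "\<dots> = (\<Sum>i\<in>{i\<in>{1..CARD('n)}. 1/2 < \<bar>d $ \<sigma> i\<bar>}. lam i)"
    by (rule sum.inter_filter[symmetric]) simp
  also have "\<dots> = (\<Sum>i=1..card B. lam i)"
    unfolding abs_sorting_superlevel_set[OF \<sigma>] by (simp add: abs_d)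
  finally show ?thesis using dual[of d] Ud by simp
qed

lemma sum_prefix_le_sum_lam_of_dual:
  fixes U :: "real^'n"
  assumes dual: "\<And>d. U \<bullet> d \<le> slope_pen lam d"
    and \<pi>: "bij_betw \<pi> {1..CARD('n)} UNIV" and "k \<le> CARD('n)"
  shows "(\<Sum>i=1..k. \<bar>U $ \<pi> i\<bar>) \<le> (\<Sum>i=1..k. lam i)"
  using sum_initial_segment_reindex(1)[OF \<pi> \<open>k \<le> CARD('n)\<close>, of "\<lambda>j. \<bar>U $ j\<bar>"]
    sum_initial_segment_reindex(2)[OF \<pi> \<open>k \<le> CARD('n)\<close>]
    sum_abs_le_sum_lam_of_dual[OF dual, of "\<pi> ` {1..k}"]
  by simp

lemma sum_ord_abs_le_sum_lam_of_dual:
  fixes U :: "real^'n"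
  assumes dual: "\<And>d. U \<bullet> d \<le> slope_pen lam d" and "k \<le> CARD('n)"
  shows "(\<Sum>i=1..k. ord_abs U i) \<le> (\<Sum>i=1..k. lam i)"
proof -
  obtain \<sigma> where \<sigma>: "abs_sorting \<sigma> U" using abs_sorting_exists by blast
  have "(\<Sum>i=1..k. ord_abs U i) = (\<Sum>i=1..k. \<bar>U $ \<sigma> i\<bar>)"
    using \<open>k \<le> CARD('n)\<close> by (intro sum.cong) (auto simp: ord_abs_eq_abs_sorting[OF \<sigma>])
  then show ?thesis
    using sum_prefix_le_sum_lam_of_dual[OF dual abs_sorting_bij[OF \<sigma>] \<open>k \<le> CARD('n)\<close>] by simp
qed

lemma slope_pen_shrink_support:
  fixes b :: "real^'n"
  assumes "0 \<le> t" and t_le: "\<And>j. b $ j \<noteq> 0 \<Longrightarrow> t \<le> \<bar>b $ j\<bar>"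
  shows "slope_pen lam (b - t *\<^sub>R (\<chi> j. sgn (b $ j)))
       = slope_pen lam b - t * (\<Sum>i=1..card {j. b $ j \<noteq> 0}. lam i)"
proof -
  define v where "v = b - t *\<^sub>R (\<chi> j. sgn (b $ j))"
  have abs_v: "\<bar>v $ j\<bar> = (if b $ j \<noteq> 0 then \<bar>b $ j\<bar> - t else 0)" for j
    using t_le[of j] by (auto simp: v_def sgn_if)
  obtain \<sigma> where \<sigma>: "abs_sorting \<sigma> b" using abs_sorting_exists by blast
  have "abs_sorting \<sigma> v"
    unfolding abs_sorting_def
  proof (intro conjI allI impI)
    show "bij_betw \<sigma> {1..CARD('n)} UNIV" by (rule abs_sorting_bij[OF \<sigma>])
    fix i j assume "1 \<le> i" "i \<le> j" "j \<le> CARD('n)"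
    then have "\<bar>b $ \<sigma> j\<bar> \<le> \<bar>b $ \<sigma> i\<bar>" by (rule abs_sorting_mono[OF \<sigma>])
    then show "\<bar>v $ \<sigma> j\<bar> \<le> \<bar>v $ \<sigma> i\<bar>"
      using t_le[of "\<sigma> i"] by (auto simp: abs_v)
  qed
  have "slope_pen lam v
      = (\<Sum>i=1..CARD('n). lam i * \<bar>b $ \<sigma> i\<bar> - t * (if b $ \<sigma> i \<noteq> 0 then lam i else 0))"
    unfolding slope_pen_eq_abs_sorting[OF \<open>abs_sorting \<sigma> v\<close>]
    by (intro sum.cong) (auto simp: abs_v algebra_simps)
  also have "\<dots> = slope_pen lam b - t * (\<Sum>i\<in>{1..CARD('n)}. if b $ \<sigma> i \<noteq> 0 then lam i else 0)"
    by (simp add: slope_pen_eq_abs_sorting[OF \<sigma>] sum_subtractf sum_distrib_left)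
  also have "(\<Sum>i\<in>{1..CARD('n)}. if b $ \<sigma> i \<noteq> 0 then lam i else 0)
           = (\<Sum>i\<in>{i\<in>{1..CARD('n)}. b $ \<sigma> i \<noteq> 0}. lam i)"
    by (rule sum.inter_filter[symmetric]) simp
  also have "{i\<in>{1..CARD('n)}. b $ \<sigma> i \<noteq> 0} = {1..card {j. b $ j \<noteq> 0}}"
    using abs_sorting_superlevel_set[OF \<sigma>, of 0] by simp
  finally show ?thesis by (simp add: v_def)
qed

lemma slope_subgradient_on_support:
  fixes U b :: "real^'n"
  assumes subgrad: "slope_subgradient lam U b"
  shows "(\<Sum>j | b $ j \<noteq> 0. \<bar>U $ j\<bar>) = (\<Sum>i=1..card {j. b $ j \<noteq> 0}. lam i)"
    and "b $ j \<noteq> 0 \<Longrightarrow> U $ j * sgn (b $ j) = \<bar>U $ j\<bar>"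
proof -
  define A where "A = {j. b $ j \<noteq> 0}"
  define s :: "real^'n" where "s = (\<chi> j. sgn (b $ j))"
  have dual: "\<And>d. U \<bullet> d \<le> slope_pen lam d" and opt: "U \<bullet> b = slope_pen lam b"
    using subgrad by (auto simp: slope_subgradient_def)
  have "U \<bullet> s = (\<Sum>j\<in>UNIV. U $ j * sgn (b $ j))"
    by (simp add: inner_vec_def s_def)
  also have "\<dots> = (\<Sum>j\<in>A. U $ j * sgn (b $ j))"
    by (rule sum.mono_neutral_right) (auto simp: A_def)
  finally have Us: "U \<bullet> s = (\<Sum>j\<in>A. U $ j * sgn (b $ j))" .
  \<comment> \<open>shrinking \<open>b\<close> towards \<open>0\<close> on its support lowers the penalty at rate \<open>\<Sum>i=1..card A. lam i\<close>\<close>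
  have lower: "(\<Sum>i=1..card A. lam i) \<le> (\<Sum>j\<in>A. U $ j * sgn (b $ j))"
  proof (cases "A = {}")
    case False
    define t where "t = Min ((\<lambda>j. \<bar>b $ j\<bar>) ` A)"
    have "0 < t" "\<And>j. b $ j \<noteq> 0 \<Longrightarrow> t \<le> \<bar>b $ j\<bar>"
      using False by (auto simp: t_def A_def)
    then have "U \<bullet> (b - t *\<^sub>R s) \<le> slope_pen lam b - t * (\<Sum>i=1..card A. lam i)"
      using dual[of "b - t *\<^sub>R s"] slope_pen_shrink_support[of t b lam] by (simp add: s_def A_def)
    then have "t * (\<Sum>i=1..card A. lam i) \<le> t * (U \<bullet> s)"
      using opt by (simp add: inner_diff_right)
    then show ?thesis using \<open>0 < t\<close> Us by simp
  qed simp
  have termwise: "U $ j * sgn (b $ j) \<le> \<bar>U $ j\<bar>" for j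
    by (auto simp: sgn_if)
  have upper: "(\<Sum>j\<in>A. \<bar>U $ j\<bar>) \<le> (\<Sum>i=1..card A. lam i)"
    by (rule sum_abs_le_sum_lam_of_dual[OF dual])
  have middle: "(\<Sum>j\<in>A. U $ j * sgn (b $ j)) \<le> (\<Sum>j\<in>A. \<bar>U $ j\<bar>)"
    using termwise by (rule sum_mono)
  show "(\<Sum>j | b $ j \<noteq> 0. \<bar>U $ j\<bar>) = (\<Sum>i=1..card {j. b $ j \<noteq> 0}. lam i)"
    using lower middle upper by (simp add: A_def)
  have "(\<Sum>j\<in>A. \<bar>U $ j\<bar> - U $ j * sgn (b $ j)) = 0"
    using lower middle upper by (simp add: sum_subtractf)
  then show "U $ j * sgn (b $ j) = \<bar>U $ j\<bar>" if "b $ j \<noteq> 0"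
    using termwise that by (subst (asm) sum_nonneg_eq_0_iff) (auto simp: A_def)
qed

lemma slope_subgradient_threshold:
  fixes U b :: "real^'n"
  assumes mono: "\<And>i j. 1 \<le> i \<Longrightarrow> i \<le> j \<Longrightarrow> j \<le> CARD('n) \<Longrightarrow> lam j \<le> lam i"
    and subgrad: "slope_subgradient lam U b" and "b \<noteq> 0"
  defines "R \<equiv> card {j. b $ j \<noteq> 0}"
  shows "b $ j \<noteq> 0 \<Longrightarrow> lam R \<le> \<bar>U $ j\<bar>"
    and "b $ j = 0 \<Longrightarrow> \<bar>U $ j\<bar> \<le> lam R"
proof -
  define A where "A = {j. b $ j \<noteq> 0}"
  have dual: "\<And>d. U \<bullet> d \<le> slope_pen lam d"
    using subgrad by (simp add: slope_subgradient_def)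
  have on_A: "(\<Sum>k\<in>A. \<bar>U $ k\<bar>) = (\<Sum>i=1..R. lam i)"
    using slope_subgradient_on_support(1)[OF subgrad] by (simp add: A_def R_def)
  have "A \<noteq> {}" using \<open>b \<noteq> 0\<close> by (auto simp: A_def vec_eq_iff)
  then have "1 \<le> R" by (simp add: R_def A_def[symmetric] Suc_le_eq card_gt_0_iff)
  show "lam R \<le> \<bar>U $ j\<bar>" if "b $ j \<noteq> 0"
  proof -
    have "j \<in> A" using that by (simp add: A_def)
    then have "(\<Sum>k\<in>A. \<bar>U $ k\<bar>) = \<bar>U $ j\<bar> + (\<Sum>k\<in>A - {j}. \<bar>U $ k\<bar>)"
      by (simp add: sum.remove)
    moreover have "(\<Sum>k\<in>A - {j}. \<bar>U $ k\<bar>) \<le> (\<Sum>i=1..R-1. lam i)"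
      using sum_abs_le_sum_lam_of_dual[OF dual, of "A - {j}"] \<open>j \<in> A\<close> by (simp add: R_def A_def)
    moreover have "(\<Sum>i=1..R. lam i) = (\<Sum>i=1..R-1. lam i) + lam R"
      using \<open>1 \<le> R\<close> by (cases R) auto
    ultimately show ?thesis using on_A by linarith
  qed
  show "\<bar>U $ j\<bar> \<le> lam R" if "b $ j = 0"
  proof -
    have "j \<notin> A" using that by (simp add: A_def)
    then have card: "card (insert j A) = Suc R" by (simp add: R_def A_def)
    then have "Suc R \<le> CARD('n)" using card_mono[of UNIV "insert j A"] by simp
    have "(\<Sum>k\<in>insert j A. \<bar>U $ k\<bar>) \<le> (\<Sum>i=1..Suc R. lam i)"
      using sum_abs_le_sum_lam_of_dual[OF dual, of "insert j A"] card by simp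
    then have "\<bar>U $ j\<bar> \<le> lam (Suc R)"
      using \<open>j \<notin> A\<close> on_A by simp
    also have "\<dots> \<le> lam R"
      using mono[of R "Suc R"] \<open>1 \<le> R\<close> \<open>Suc R \<le> CARD('n)\<close> by simp
    finally show ?thesis .
  qed
qed

lemma abs_add_mult_same_sign:
  fixes x y a :: real
  assumes "x * sgn y = \<bar>x\<bar>" "0 \<le> a"
  shows "\<bar>x + a * y\<bar> = \<bar>x\<bar> + a * \<bar>y\<bar>"
proof (cases "0 \<le> y")
  case True
  then have "0 \<le> x" using assms(1) by (auto simp: sgn_if split: if_splits)
  then show ?thesis using True assms(2) by simp
next
  case False
  then have "x \<le> 0" using assms(1) by (auto simp: sgn_if split: if_splits)
  moreover have "a * y \<le> 0" using False assms(2) by (simp add: mult_nonneg_nonpos)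
  ultimately show ?thesis using False by (simp add: abs_of_nonpos)
qed

lemma abs_shifted_subgradient:
  fixes U b :: "real^'n"
  assumes "slope_subgradient lam U b" "0 \<le> a"
  shows "\<bar>(U + a *\<^sub>R b) $ j\<bar> = \<bar>U $ j\<bar> + a * \<bar>b $ j\<bar>"
proof (cases "b $ j = 0")
  case False
  then show ?thesis
    using abs_add_mult_same_sign[OF slope_subgradient_on_support(2)[OF assms(1) False] assms(2)]
    by simp
qed simp

lemma abs_shifted_subgradient_gt_iff:
  fixes U b :: "real^'n"
  assumes mono: "\<And>i j. 1 \<le> i \<Longrightarrow> i \<le> j \<Longrightarrow> j \<le> CARD('n) \<Longrightarrow> lam j \<le> lam i"
    and subgrad: "slope_subgradient lam U b" and "b \<noteq> 0" "0 < a"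
  shows "lam (card {j. b $ j \<noteq> 0}) < \<bar>(U + a *\<^sub>R b) $ j\<bar> \<longleftrightarrow> b $ j \<noteq> 0"
proof (cases "b $ j = 0")
  case True
  then show ?thesis
    using slope_subgradient_threshold(2)[OF mono subgrad \<open>b \<noteq> 0\<close> True]
      abs_shifted_subgradient[OF subgrad, of a j] \<open>0 < a\<close> by simp
next
  case False
  then have "0 < a * \<bar>b $ j\<bar>" using \<open>0 < a\<close> by simp
  then show ?thesis
    using slope_subgradient_threshold(1)[OF mono subgrad \<open>b \<noteq> 0\<close> False]
      abs_shifted_subgradient[OF subgrad, of a j] \<open>0 < a\<close> False by linarith
qed

section \<open>The sets \<open>H_set lam r\<close>\<close>

lemma sum_split_at_nat:
  fixes f :: "nat \<Rightarrow> 'a::comm_monoid_add"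
  assumes "1 \<le> j" "j \<le> Suc r"
  shows "(\<Sum>i=1..r. f i) = (\<Sum>i=1..j-1. f i) + (\<Sum>i=j..r. f i)"
proof -
  have "{1..r} = {1..j-1} \<union> {j..r}" "{1..j-1} \<inter> {j..r} = {}"
    using assms by auto
  then show ?thesis by (simp add: sum.union_disjoint)
qed

lemma in_H_set_of_dominated_prefix_sums:
  fixes y :: "real^'n" and x :: "nat \<Rightarrow> real"
  assumes partial: "\<And>k. k \<le> CARD('n) \<Longrightarrow> (\<Sum>i=1..k. x i) \<le> (\<Sum>i=1..k. lam i)"
    and partial_R: "(\<Sum>i=1..R. x i) = (\<Sum>i=1..R. lam i)" and "R \<le> CARD('n)"
    and above: "\<And>i. 1 \<le> i \<Longrightarrow> i \<le> R \<Longrightarrow> x i < ord_abs y i"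
    and below: "\<And>i. R < i \<Longrightarrow> i \<le> CARD('n) \<Longrightarrow> ord_abs y i = x i"
  shows "y \<in> H_set lam R"
  unfolding H_set_def
proof (intro CollectI conjI ballI)
  fix j assume j: "j \<in> {1..R}"
  then have split: "1 \<le> j" "j \<le> Suc R" and "j - 1 \<le> CARD('n)"
    using \<open>R \<le> CARD('n)\<close> by auto
  have "(\<Sum>i=j..R. lam i) \<le> (\<Sum>i=j..R. x i)"
    using sum_split_at_nat[OF split, of lam] sum_split_at_nat[OF split, of x]
      partial[OF \<open>j - 1 \<le> CARD('n)\<close>] partial_R by linarith
  also have "\<dots> < (\<Sum>i=j..R. ord_abs y i)"
    using j above by (intro sum_strict_mono) auto
  finally show "(\<Sum>i=j..R. lam i) < (\<Sum>i=j..R. ord_abs y i)" .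
next
  fix j assume j: "j \<in> {R+1..CARD('n)}"
  then have split: "1 \<le> R + 1" "R + 1 \<le> Suc j" and "j \<le> CARD('n)"
    by auto
  have "(\<Sum>i=R+1..j. ord_abs y i) = (\<Sum>i=R+1..j. x i)"
    using j below by (intro sum.cong) auto
  also have "\<dots> \<le> (\<Sum>i=R+1..j. lam i)"
    using sum_split_at_nat[OF split, of lam] sum_split_at_nat[OF split, of x]
      partial[OF \<open>j \<le> CARD('n)\<close>] partial_R by simp
  finally show "(\<Sum>i=R+1..j. ord_abs y i) \<le> (\<Sum>i=R+1..j. lam i)" .
qed

lemma shifted_subgradient_in_H_set:
  fixes U b :: "real^'n"
  assumes mono: "\<And>i j. 1 \<le> i \<Longrightarrow> i \<le> j \<Longrightarrow> j \<le> CARD('n) \<Longrightarrow> lam j \<le> lam i"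
    and subgrad: "slope_subgradient lam U b" and "b \<noteq> 0" "0 < a"
  shows "U + a *\<^sub>R b \<in> H_set lam (card {j. b $ j \<noteq> 0})"
proof -
  define y where "y = U + a *\<^sub>R b"
  define A where "A = {j. b $ j \<noteq> 0}"
  have dual: "\<And>d. U \<bullet> d \<le> slope_pen lam d"
    using subgrad by (simp add: slope_subgradient_def)
  obtain \<sigma> where \<sigma>: "abs_sorting \<sigma> y" using abs_sorting_exists by blast
  have bij: "bij_betw \<sigma> {1..CARD('n)} UNIV" by (rule abs_sorting_bij[OF \<sigma>])
  have "card A \<le> CARD('n)" by (simp add: card_mono)
  have "{j. lam (card A) < \<bar>y $ j\<bar>} = A"
    using abs_shifted_subgradient_gt_iff[OF mono subgrad \<open>b \<noteq> 0\<close> \<open>0 < a\<close>]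
    by (auto simp: y_def A_def)
  note prefix = abs_sorting_prefix_eq_superlevel_set[OF \<sigma> this]
  have "(\<Sum>i=1..card A. \<bar>U $ \<sigma> i\<bar>) = (\<Sum>i=1..card A. lam i)"
    using sum_initial_segment_reindex(1)[OF bij \<open>card A \<le> CARD('n)\<close>, of "\<lambda>j. \<bar>U $ j\<bar>"]
      prefix(2) slope_subgradient_on_support(1)[OF subgrad]
    by (simp add: A_def)
  moreover have "\<bar>U $ \<sigma> i\<bar> < ord_abs y i" if "1 \<le> i" "i \<le> card A" for i
  proof -
    have "i \<le> CARD('n)" using that \<open>card A \<le> CARD('n)\<close> by simp
    then have "b $ \<sigma> i \<noteq> 0"
      using prefix(1)[of i] that by (simp add: A_def)
    moreover have "ord_abs y i = \<bar>y $ \<sigma> i\<bar>"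
      by (rule ord_abs_eq_abs_sorting[OF \<sigma> \<open>1 \<le> i\<close> \<open>i \<le> CARD('n)\<close>])
    ultimately show ?thesis
      using abs_shifted_subgradient[OF subgrad, of a "\<sigma> i"] \<open>0 < a\<close> by (simp add: y_def)
  qed
  moreover have "ord_abs y i = \<bar>U $ \<sigma> i\<bar>" if "card A < i" "i \<le> CARD('n)" for i
  proof -
    have "1 \<le> i" using that by simp
    then have "b $ \<sigma> i = 0"
      using prefix(1)[of i] that by (simp add: A_def)
    moreover have "ord_abs y i = \<bar>y $ \<sigma> i\<bar>"
      by (rule ord_abs_eq_abs_sorting[OF \<sigma> \<open>1 \<le> i\<close> \<open>i \<le> CARD('n)\<close>])
    ultimately show ?thesis by (simp add: y_def)
  qed
  ultimately have "y \<in> H_set lam (card A)"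
    using sum_prefix_le_sum_lam_of_dual[OF dual bij] \<open>card A \<le> CARD('n)\<close>
    by (intro in_H_set_of_dominated_prefix_sums[where x="\<lambda>i. \<bar>U $ \<sigma> i\<bar>"])
  then show ?thesis by (simp add: y_def A_def)
qed

lemma H_set_unique:
  fixes y :: "real^'n"
  assumes "y \<in> H_set lam r" "y \<in> H_set lam s" "r \<in> {1..CARD('n)}" "s \<in> {1..CARD('n)}"
  shows "r = s"
proof -
  have False if "y \<in> H_set lam r" "y \<in> H_set lam s" "r \<in> {1..CARD('n)}" "s < r" for r s
  proof -
    have "(\<Sum>i=s+1..r. lam i) < (\<Sum>i=s+1..r. ord_abs y i)"
      using that(1,4) unfolding H_set_def by auto
    moreover have "(\<Sum>i=s+1..r. ord_abs y i) \<le> (\<Sum>i=s+1..r. lam i)"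
      using that(2,3,4) unfolding H_set_def by auto
    ultimately show False by simp
  qed
  then show ?thesis using assms by (metis linorder_neqE_nat)
qed

lemma not_in_H_set_of_dual:
  fixes U :: "real^'n"
  assumes dual: "\<And>d. U \<bullet> d \<le> slope_pen lam d" and "r \<in> {1..CARD('n)}"
  shows "U \<notin> H_set lam r"
proof
  assume "U \<in> H_set lam r"
  then have "(\<Sum>i=1..r. lam i) < (\<Sum>i=1..r. ord_abs U i)"
    using assms(2) unfolding H_set_def by auto
  then show False
    using sum_ord_abs_le_sum_lam_of_dual[OF dual, of r] assms(2) by simp
qed

lemma slope_pattern_iff:
  fixes U b :: "real^'n"
  assumes mono: "\<And>i j. 1 \<le> i \<Longrightarrow> i \<le> j \<Longrightarrow> j \<le> CARD('n) \<Longrightarrow> lam j \<le> lam i"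
    and subgrad: "slope_subgradient lam U b" and "0 < a" and r: "r \<in> {1..CARD('n)}"
  shows "(lam r < \<bar>(U + a *\<^sub>R b) $ i\<bar> \<and> U + a *\<^sub>R b \<in> H_set lam r)
     \<longleftrightarrow> (b $ i \<noteq> 0 \<and> card {j. b $ j \<noteq> 0} = r)"
proof (cases "b = 0")
  case True
  then show ?thesis
    using not_in_H_set_of_dual[OF _ r, of U] subgrad by (simp add: slope_subgradient_def)
next
  case False
  define R where "R = card {j. b $ j \<noteq> 0}"
  have "{j. b $ j \<noteq> 0} \<noteq> {}" using False by (auto simp: vec_eq_iff)
  then have "R \<in> {1..CARD('n)}" by (auto simp: R_def Suc_le_eq card_gt_0_iff card_mono)
  moreover have "U + a *\<^sub>R b \<in> H_set lam R"
    unfolding R_def by (rule shifted_subgradient_in_H_set[OF mono subgrad False \<open>0 < a\<close>])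
  ultimately have "U + a *\<^sub>R b \<in> H_set lam r \<longleftrightarrow> r = R"
    using H_set_unique[of "U + a *\<^sub>R b" lam r R] r by blast
  then show ?thesis
    using abs_shifted_subgradient_gt_iff[OF mono subgrad False \<open>0 < a\<close>, of i] by (auto simp: R_def)
qed

section \<open>False discovery rate\<close>

lemma false_discovery_proportion_eq:
  fixes b b0 :: "real^'n"
  shows "real (card {j. b0 $ j = 0 \<and> b $ j \<noteq> 0}) / real (max (card {j. b $ j \<noteq> 0}) 1)
       = (\<Sum>r=1..CARD('n). (1 / real r) *
            (\<Sum>i\<in>{j. b0 $ j = 0}. of_bool (b $ i \<noteq> 0 \<and> card {j. b $ j \<noteq> 0} = r)))"
proof -
  define R where "R = card {j. b $ j \<noteq> 0}"
  define V where "V = card {j. b0 $ j = 0 \<and> b $ j \<noteq> 0}"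
  have inner: "(\<Sum>i\<in>{j. b0 $ j = 0}. of_bool (b $ i \<noteq> 0 \<and> R = r)) = (if R = r then real V else 0)"
    for r
    by (auto simp: V_def sum.If_cases Int_def conj_commute)
  have "R \<le> CARD('n)" by (simp add: R_def card_mono)
  have "(\<Sum>r=1..CARD('n). (1 / real r) * (\<Sum>i\<in>{j. b0 $ j = 0}. of_bool (b $ i \<noteq> 0 \<and> R = r)))
      = (\<Sum>r=1..CARD('n). if r = R then real V / real R else 0)"
    by (intro sum.cong) (auto simp: inner)
  also have "\<dots> = (if R \<in> {1..CARD('n)} then real V / real R else 0)"
    by (simp add: sum.delta')
  also have "\<dots> = real V / real (max R 1)"
  proof (cases "R = 0")
    case True
    then have "V = 0" by (simp add: R_def V_def)
    then show ?thesis by simp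
  qed (use \<open>R \<le> CARD('n)\<close> in \<open>simp add: max_def\<close>)
  finally show ?thesis by (simp add: R_def V_def)
qed

lemma support_event_measurable:
  fixes f :: "'w \<Rightarrow> real^'n"
  assumes "f \<in> borel_measurable M"
  shows "{\<omega>\<in>space M. f \<omega> $ i \<noteq> 0 \<and> card {j. f \<omega> $ j \<noteq> 0} = r} \<in> sets M"
proof -
  have "(\<lambda>x::real^'n. x $ j) \<in> borel_measurable borel" for j
    by (intro borel_measurable_continuous_onI continuous_intros)
  then have coord: "(\<lambda>\<omega>. f \<omega> $ j) \<in> borel_measurable M" for j
    using measurable_compose[OF assms] by blast
  \<comment> \<open>the cardinality is written as a finite sum of indicators so that it is seen to be measurable\<close>
  have "real (card {j. f \<omega> $ j \<noteq> 0}) = (\<Sum>j\<in>UNIV. if f \<omega> $ j \<noteq> 0 then 1 else 0)" for \<omega>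
    by (simp add: sum.If_cases)
  then have "{\<omega>\<in>space M. f \<omega> $ i \<noteq> 0 \<and> card {j. f \<omega> $ j \<noteq> 0} = r}
      = {\<omega>\<in>space M. f \<omega> $ i \<noteq> 0 \<and> (\<Sum>j\<in>UNIV. if f \<omega> $ j \<noteq> 0 then 1 else 0 :: real) = real r}"
    by (metis (no_types, lifting) of_nat_eq_iff)
  also have "\<dots> \<in> sets M"
    using coord by measurable
  finally show ?thesis .
qed

lemma expected_false_discovery_proportion:
  fixes M :: "'w measure" and bhat :: "'w \<Rightarrow> real^'n" and b0 :: "real^'n"
  assumes "finite_measure M" "bhat \<in> borel_measurable M"
  shows "(\<integral>\<omega>. real (card {j. b0 $ j = 0 \<and> bhat \<omega> $ j \<noteq> 0})
                / real (max (card {j. bhat \<omega> $ j \<noteq> 0}) 1) \<partial>M)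
       = (\<Sum>r=1..CARD('n). (1 / real r) * (\<Sum>i\<in>{j. b0 $ j = 0}.
            measure M {\<omega>\<in>space M. bhat \<omega> $ i \<noteq> 0 \<and> card {j. bhat \<omega> $ j \<noteq> 0} = r}))"
proof -
  interpret finite_measure M by fact
  define E where "E r i = {\<omega>\<in>space M. bhat \<omega> $ i \<noteq> 0 \<and> card {j. bhat \<omega> $ j \<noteq> 0} = r}" for r i
  have E: "E r i \<in> sets M" for r i
    unfolding E_def using assms(2) by (rule support_event_measurable)
  have "(\<integral>\<omega>. real (card {j. b0 $ j = 0 \<and> bhat \<omega> $ j \<noteq> 0})
                / real (max (card {j. bhat \<omega> $ j \<noteq> 0}) 1) \<partial>M)
      = (\<integral>\<omega>. (\<Sum>r=1..CARD('n). (1 / real r) * (\<Sum>i\<in>{j. b0 $ j = 0}. indicator (E r i) \<omega>)) \<partial>M)"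
  proof (rule Bochner_Integration.integral_cong[OF refl])
    fix \<omega> assume "\<omega> \<in> space M"
    then have "indicator (E r i) \<omega>
        = (of_bool (bhat \<omega> $ i \<noteq> 0 \<and> card {j. bhat \<omega> $ j \<noteq> 0} = r) :: real)"
      for r i by (simp add: E_def indicator_def)
    then show "real (card {j. b0 $ j = 0 \<and> bhat \<omega> $ j \<noteq> 0})
          / real (max (card {j. bhat \<omega> $ j \<noteq> 0}) 1)
      = (\<Sum>r=1..CARD('n). (1 / real r) * (\<Sum>i\<in>{j. b0 $ j = 0}. indicator (E r i) \<omega>))"
      by (simp only: false_discovery_proportion_eq)
  qed
  also have "\<dots> = (\<Sum>r=1..CARD('n). (1 / real r) * (\<Sum>i\<in>{j. b0 $ j = 0}. measure M (E r i)))"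
  proof -
    have "integrable M (indicator (E r i) :: 'w \<Rightarrow> real)" for r i
      using E by (simp add: less_top[symmetric])
    moreover have "E r i \<inter> space M = E r i" for r i
      by (auto simp: E_def)
    ultimately show ?thesis by (simp add: integral_sum integral_mult_right_zero)
  qed
  finally show ?thesis by (simp add: E_def)
qed

theorem corollary1:
  fixes M :: "'w measure"
    and l :: "'w \<Rightarrow> real^'n \<Rightarrow> real"
    and gradl :: "'w \<Rightarrow> real^'n \<Rightarrow> real^'n"
    and lam :: "nat \<Rightarrow> real"
    and bhat :: "'w \<Rightarrow> real^'n"
    and b0 :: "real^'n"
    and a :: real
  assumes "prob_space M"
    and convex: "\<And>\<omega>. \<omega> \<in> space M \<Longrightarrow> convex_on UNIV (l \<omega>)"
    and grad: "\<And>\<omega> b. \<omega> \<in> space M \<Longrightarrow> (l \<omega> has_derivative (\<lambda>h. gradl \<omega> b \<bullet> h)) (at b)"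
    and lam_mono: "\<And>i j. 1 \<le> i \<Longrightarrow> i \<le> j \<Longrightarrow> j \<le> CARD('n) \<Longrightarrow> lam j \<le> lam i"
    and lam_nonneg: "\<And>i. 1 \<le> i \<Longrightarrow> i \<le> CARD('n) \<Longrightarrow> 0 \<le> lam i"
    and minimizer: "\<And>\<omega> b. \<omega> \<in> space M \<Longrightarrow>
        l \<omega> (bhat \<omega>) + slope_pen lam (bhat \<omega>) \<le> l \<omega> b + slope_pen lam b"
    and bhat_meas: "bhat \<in> borel_measurable M"
    and grad_meas: "(\<lambda>\<omega>. gradl \<omega> (bhat \<omega>)) \<in> borel_measurable M"
    and "a > 0"
  shows "(\<integral>\<omega>. real (card {j. b0 $ j = 0 \<and> bhat \<omega> $ j \<noteq> 0})
                / real (max (card {j. bhat \<omega> $ j \<noteq> 0}) 1) \<partial>M)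
       = (\<Sum>r=1..CARD('n). (1 / real r) *
            (\<Sum>i\<in>{j. b0 $ j = 0}.
               measure M {\<omega> \<in> space M.
                  let T = - gradl \<omega> (bhat \<omega>) + a *\<^sub>R bhat \<omega>
                  in \<bar>T $ i\<bar> > lam r \<and> T \<in> H_set lam r}))"
proof -
  interpret prob_space M by fact
  have subgrad: "slope_subgradient lam (- gradl \<omega> (bhat \<omega>)) (bhat \<omega>)" if "\<omega> \<in> space M" for \<omega>
    using slope_subgradient_of_minimizer[OF lam_mono lam_nonneg grad[OF that] minimizer[OF that]] .
  have events: "{\<omega> \<in> space M. let T = - gradl \<omega> (bhat \<omega>) + a *\<^sub>R bhat \<omega>
                  in \<bar>T $ i\<bar> > lam r \<and> T \<in> H_set lam r}
      = {\<omega>\<in>space M. bhat \<omega> $ i \<noteq> 0 \<and> card {j. bhat \<omega> $ j \<noteq> 0} = r}"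
    if "r \<in> {1..CARD('n)}" for r i
    using slope_pattern_iff[OF lam_mono subgrad \<open>a > 0\<close> that] by (auto simp: Let_def)
  show ?thesis
    unfolding expected_false_discovery_proportion[OF finite_measure_axioms bhat_meas]
    by (intro sum.cong refl arg_cong2[where f="(*)"]) (simp only: events)
qed

end
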